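(* For every Minkowski space $X$ of dimension at least $3$, $m(X)\geq 4$.
   Context: A Minkowski space is a finite-dimensional real normed space $(X,\|\cdot\|)$. For a set $S\subseteq X$, its midpoint set is $M(S)=\{\tfrac12(x+y): x,y\in S,\ x\neq y\}$. A set $S\subseteq X$ is an M-set if every vector in $M(S)$ has norm exactly $1$ and every vector in $S$ has norm strictly greater than $1$. $m(X)$ denotes the largest cardinality of an M-set in $X$ if such a largest finite cardinality exists, and $m(X)=\infty$ otherwise. *)

theory Defs
  imports "HOL-Analysis.Analysis" "HOL-Library.Extended_Nat"
begin

text \<open>A Minkowski space is modelled as a type of class real_normed_vector that is
  finite-dimensional (spanned by a finite set).\<close>

definition midpoint_set :: "'a::real_vector set \<Rightarrow> 'a set" where
  "midpoint_set S = {(1/2) *\<^sub>R (x + y) | x y. x \<in> S \<and> y \<in> S \<and> x \<noteq> y}"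

definition is_M_set :: "'a::real_normed_vector set \<Rightarrow> bool" where
  "is_M_set S \<longleftrightarrow> (\<forall>v \<in> midpoint_set S. norm v = 1) \<and> (\<forall>x \<in> S. norm x > 1)"

definition m_const :: "'a::real_normed_vector itself \<Rightarrow> enat" where
  "m_const (_ :: 'a itself) = Sup {enat (card S) | S :: 'a set. finite S \<and> is_M_set S}"

end

theory Submission
  imports Defs
begin

(* Since dim X >= 3, there is an injective linear map L from a Euclidean space E of
   dimension >= 3 into X, so N(x) = ||L x|| is a norm on E.  Pick a point c of the
   N-unit sphere of maximal Euclidean length.  Then c is "exposed": N(c + p) > 1 for
   every nonzero p orthogonal to c, since the N-unit ball lies inside the Euclidean
   ball of radius |c| while |c + p| > |c|.  Choose u, v orthogonal to c and to each
   other with N(u) = N(v) = 1.  With a = L u, b = L v, c' = L c the four points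
   a+b+c', a-b-c', b-a-c', c'-a-b have the six midpoints +-a, +-b, +-c', all of norm 1,
   and each point is of the form +-L(c + p) with p orthogonal to c, hence has norm > 1. *)

lemma M_set_card_le_m_const:
  fixes S :: "'a::real_normed_vector set"
  assumes "finite S" and "is_M_set S"
  shows "enat (card S) \<le> m_const TYPE('a)"
  unfolding m_const_def using assms by (intro Sup_upper) blast

lemma four_point_midpoints:
  fixes a b c :: "'a::real_vector"
  defines "T \<equiv> {a + b + c, a - b - c, b - a - c, c - a - b}"
  assumes "x \<in> T" and "y \<in> T" and "x \<noteq> y"
  shows "x + y \<in> {2 *\<^sub>R a, - 2 *\<^sub>R a, 2 *\<^sub>R b, - 2 *\<^sub>R b, 2 *\<^sub>R c, - 2 *\<^sub>R c}"
  using assms(2-4) unfolding T_def by (elim insertE emptyE; hypsubst; simp add: scaleR_2 algebra_simps)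

lemma four_point_M_set:
  fixes a b c :: "'a::real_normed_vector"
  defines "T \<equiv> {a + b + c, a - b - c, b - a - c, c - a - b}"
  assumes "norm a = 1" and "norm b = 1" and "norm c = 1"
    and "\<And>x. x \<in> T \<Longrightarrow> norm x > 1"
  shows "is_M_set T"
  unfolding is_M_set_def midpoint_set_def
proof safe
  fix x y assume "x \<in> T" "y \<in> T" "x \<noteq> y"
  then have "x + y \<in> {2 *\<^sub>R a, - 2 *\<^sub>R a, 2 *\<^sub>R b, - 2 *\<^sub>R b, 2 *\<^sub>R c, - 2 *\<^sub>R c}"
    unfolding T_def by (rule four_point_midpoints)
  then have "norm (x + y) = 2"
    using assms(2-4) by auto
  then show "norm ((1/2) *\<^sub>R (x + y)) = 1"
    by simp
qed (use assms(5) in blast)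

text \<open>The four points are distinct as soon as \<open>a \<plusminus> b\<close>, \<open>a \<plusminus> c\<close>, \<open>b \<plusminus> c\<close> are nonzero,
  because their pairwise differences are twice these vectors.\<close>

lemma four_point_card:
  fixes a b c :: "'a::real_vector"
  assumes "a + b \<noteq> 0" "a - b \<noteq> 0" "a + c \<noteq> 0" "a - c \<noteq> 0" "b + c \<noteq> 0" "b - c \<noteq> 0"
  shows "card {a + b + c, a - b - c, b - a - c, c - a - b} = 4"
proof -
  have differences:
    "(a + b + c) - (a - b - c) = 2 *\<^sub>R (b + c)" "(a + b + c) - (b - a - c) = 2 *\<^sub>R (a + c)"
    "(a + b + c) - (c - a - b) = 2 *\<^sub>R (a + b)" "(a - b - c) - (b - a - c) = 2 *\<^sub>R (a - b)"
    "(a - b - c) - (c - a - b) = 2 *\<^sub>R (a - c)" "(b - a - c) - (c - a - b) = 2 *\<^sub>R (b - c)"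
    by (simp_all add: scaleR_2 algebra_simps)
  have "a + b + c \<noteq> a - b - c" "a + b + c \<noteq> b - a - c" "a + b + c \<noteq> c - a - b"
    "a - b - c \<noteq> b - a - c" "a - b - c \<noteq> c - a - b" "b - a - c \<noteq> c - a - b"
    using differences assms by (metis eq_iff_diff_eq_0 scaleR_eq_0_iff zero_neq_numeral)+
  then show ?thesis by simp
qed

text \<open>If \<open>dim X \<ge> DIM('e)\<close>, the Euclidean space \<open>'e\<close> embeds linearly into \<open>X\<close>: send the
  standard basis bijectively onto part of a basis of \<open>X\<close> and extend linearly.\<close>

lemma linear_embedding_of_euclidean:
  assumes "DIM('e) \<le> dim (UNIV :: 'a set)"
  obtains L :: "'e::euclidean_space \<Rightarrow> 'a::real_vector" where "linear L" and "inj L"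
proof -
  obtain B :: "'a set" where B: "independent B" "card B = dim (UNIV :: 'a set)"
    using basis_exists[of "UNIV :: 'a set"] by blast
  then obtain T where T: "T \<subseteq> B" "card T = DIM('e)" "finite T"
    using assms by (metis obtain_subset_with_card_n)
  then obtain g :: "'e \<Rightarrow> 'a" where g: "bij_betw g Basis T"
    using finite_same_card_bij[of "Basis :: 'e set" T] T(2,3) by auto
  obtain L :: "'e \<Rightarrow> 'a" where L: "linear L" "\<And>x. x \<in> Basis \<Longrightarrow> L x = g x"
    using linear_independent_extend[OF independent_Basis, of g] by blast
  have "L ` Basis = T" "inj_on L Basis"
    using g L(2) by (auto simp: bij_betw_def inj_on_def image_def)
  moreover have "independent T"
    using B(1) T(1) by (rule independent_mono)
  ultimately have "inj_on L (span Basis)"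
    by (intro linear_inj_on_span_independent_image[OF L(1)]) simp_all
  then show thesis
    using that L(1) by simp
qed

lemma orthogonal_add_nonzero:
  fixes x y :: "'a::real_inner"
  assumes "x \<bullet> y = 0" and "x \<noteq> 0"
  shows "x + y \<noteq> 0"
proof
  assume "x + y = 0"
  then have "x \<bullet> y = - (x \<bullet> x)"
    by (simp add: eq_neg_iff_add_eq_0[symmetric])
  then show False
    using assms by simp
qed

lemma orthogonal_pair_exists:
  fixes c :: "'e::euclidean_space"
  assumes "DIM('e) \<ge> 3"
  obtains u v where "u \<noteq> 0" "v \<noteq> 0" "u \<bullet> c = 0" "v \<bullet> c = 0" "u \<bullet> v = 0"
proof -
  obtain u where u: "u \<noteq> 0" "u \<bullet> c = 0"
    using orthogonal_to_vector_exists[of c] assms by (auto simp: orthogonal_def inner_commute)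
  have "dim {c, u} \<le> card {c, u}"
    by (rule dim_le_card) (auto intro: span_base)
  also have "\<dots> < DIM('e)"
    using assms by (simp add: card_insert_if)
  finally obtain v where v: "v \<noteq> 0" "\<And>y. y \<in> span {c, u} \<Longrightarrow> orthogonal v y"
    using orthogonal_to_subspace_exists by blast
  have "v \<bullet> c = 0" "u \<bullet> v = 0"
    using v(2)[of c] v(2)[of u] by (auto simp: span_base orthogonal_def inner_commute)
  then show thesis
    using that u v(1) by blast
qed

text \<open>For an injective linear \<open>L\<close> out of a Euclidean space, \<open>x \<mapsto> \<parallel>L x\<parallel>\<close> dominates a
  multiple of the Euclidean norm (its minimum on the compact unit sphere).\<close>

lemma linear_inj_norm_bounded_below:
  fixes L :: "'e::euclidean_space \<Rightarrow> 'a::real_normed_vector"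
  assumes "linear L" and "inj L"
  obtains m where "m > 0" and "\<And>x. m * norm x \<le> norm (L x)"
proof -
  have L_eq_0: "L x = 0 \<longleftrightarrow> x = 0" for x
    using assms by (metis injD linear_0)
  have "continuous_on UNIV (\<lambda>x. norm (L x))"
    using assms(1) by (intro continuous_intros) (simp add: linear_continuous_on linear_linear)
  then have "\<exists>s\<in>sphere (0::'e) 1. \<forall>y\<in>sphere 0 1. norm (L s) \<le> norm (L y)"
    by (intro continuous_attains_inf) (auto intro: continuous_on_subset)
  then obtain s where s: "s \<in> sphere 0 1" "\<And>y. y \<in> sphere 0 1 \<Longrightarrow> norm (L s) \<le> norm (L y)"
    by blast
  show thesis
  proof (rule that)
    show "norm (L s) > 0"
      using s(1) L_eq_0 by fastforce
    show "norm (L s) * norm x \<le> norm (L x)" for x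
    proof (cases "x = 0")
      case False
      then have "norm (L s) \<le> norm (L ((1 / norm x) *\<^sub>R x))"
        by (intro s(2)) simp
      then show ?thesis
        using False assms(1) by (simp add: linear_scale field_simps)
    qed (simp add: L_eq_0)
  qed
qed

lemma linear_inj_normalize:
  fixes L :: "'e::real_vector \<Rightarrow> 'a::real_normed_vector"
  assumes "linear L" and "inj L" and "x \<noteq> 0"
  shows "norm (L ((1 / norm (L x)) *\<^sub>R x)) = 1"
proof -
  have "L x \<noteq> 0"
    using assms by (metis injD linear_0)
  then show ?thesis
    using assms(1) by (simp add: linear_scale)
qed

text \<open>Otherwise
  rescaling \<open>c + p\<close> onto the sphere would give a point longer than \<open>c\<close>.\<close>

lemma exposed_point:
  fixes L :: "'e::euclidean_space \<Rightarrow> 'a::real_normed_vector"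
  assumes "linear L" and "inj L"
  obtains c where "norm (L c) = 1" and "\<And>p. p \<bullet> c = 0 \<Longrightarrow> p \<noteq> 0 \<Longrightarrow> norm (L (c + p)) > 1"
proof -
  define K where "K = {x. norm (L x) = 1}"
  obtain m where m: "m > 0" "\<And>x. m * norm x \<le> norm (L x)"
    using linear_inj_norm_bounded_below[OF assms] by blast
  have "bounded K"
    unfolding K_def bounded_iff using m
    by (intro exI[of _ "1/m"]) (auto simp: field_simps dest: m(2)[THEN order_trans, OF eq_refl])
  moreover have "closed K"
    unfolding K_def using assms(1)
    by (intro closed_Collect_eq continuous_intros) (simp_all add: linear_continuous_on linear_linear)
  ultimately have "compact K"
    by (simp add: compact_eq_bounded_closed)
  moreover obtain b :: 'e where "b \<in> Basis"
    using nonempty_Basis by blast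
  then have "(1 / norm (L b)) *\<^sub>R b \<in> K"
    unfolding K_def using assms by (intro CollectI linear_inj_normalize) auto
  ultimately obtain c where c: "c \<in> K" "\<And>y. y \<in> K \<Longrightarrow> norm y \<le> norm c"
    using continuous_attains_sup[of K norm] by (auto intro: continuous_intros)
  show thesis
  proof (rule that)
    show "norm (L c) = 1"
      using c(1) by (simp add: K_def)
    fix p assume p: "p \<bullet> c = 0" "p \<noteq> 0"
    have "c \<noteq> 0"
      using c(1) assms(1) by (auto simp: K_def linear_0)
    then have "c + p \<noteq> 0"
      using p(1) by (intro orthogonal_add_nonzero) (simp_all add: inner_commute)
    have "(norm (c + p))\<^sup>2 = (norm c)\<^sup>2 + (norm p)\<^sup>2"
      using p(1) by (intro norm_add_Pythagorean) (simp add: orthogonal_def inner_commute)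
    then have longer: "norm c < norm (c + p)"
      using p(2) by (smt (verit) norm_ge_zero power_mono zero_less_norm_iff zero_less_power)
    show "norm (L (c + p)) > 1"
    proof (rule ccontr)
      assume "\<not> norm (L (c + p)) > 1"
      moreover have "L (c + p) \<noteq> 0"
        using \<open>c + p \<noteq> 0\<close> assms by (metis injD linear_0)
      ultimately have "1 \<le> 1 / norm (L (c + p))"
        by simp
      moreover have "(1 / norm (L (c + p))) *\<^sub>R (c + p) \<in> K"
        unfolding K_def using assms \<open>c + p \<noteq> 0\<close> by (simp add: linear_inj_normalize)
      then have "norm ((1 / norm (L (c + p))) *\<^sub>R (c + p)) \<le> norm c"
        by (rule c(2))
      ultimately have "norm (c + p) \<le> norm c"
        by (smt (verit) mult_le_cancel_right1 norm_ge_zero norm_scaleR)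
      then show False
        using longer by simp
    qed
  qed
qed

lemma exposed_frame:
  fixes L :: "'e::euclidean_space \<Rightarrow> 'a::real_normed_vector"
  assumes "DIM('e) \<ge> 3" and "linear L" and "inj L"
  obtains c u v where "norm (L c) = 1" "norm (L u) = 1" "norm (L v) = 1"
    and "u \<noteq> 0" "v \<noteq> 0" "u \<bullet> c = 0" "v \<bullet> c = 0" "u \<bullet> v = 0"
    and "\<And>p. p \<bullet> c = 0 \<Longrightarrow> p \<noteq> 0 \<Longrightarrow> norm (L (c + p)) > 1"
proof -
  obtain c where c: "norm (L c) = 1" "\<And>p. p \<bullet> c = 0 \<Longrightarrow> p \<noteq> 0 \<Longrightarrow> norm (L (c + p)) > 1"
    using exposed_point[OF assms(2,3)] by blast
  obtain u0 v0 where uv0: "u0 \<noteq> 0" "v0 \<noteq> 0" "u0 \<bullet> c = 0" "v0 \<bullet> c = 0" "u0 \<bullet> v0 = 0"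
    using orthogonal_pair_exists[OF assms(1)] by blast
  define u where "u = (1 / norm (L u0)) *\<^sub>R u0"
  define v where "v = (1 / norm (L v0)) *\<^sub>R v0"
  have unit: "norm (L u) = 1" "norm (L v) = 1"
    unfolding u_def v_def using uv0 assms(2,3) by (simp_all add: linear_inj_normalize)
  moreover have "u \<noteq> 0" "v \<noteq> 0"
    using unit assms(2) by (auto simp: linear_0)
  moreover have "u \<bullet> c = 0" "v \<bullet> c = 0" "u \<bullet> v = 0"
    using uv0 by (simp_all add: u_def v_def)
  ultimately show thesis
    using that c by blast
qed

lemma m_const_ge_4_of_embedding:
  fixes L :: "'e::euclidean_space \<Rightarrow> 'a::real_normed_vector"
  assumes "DIM('e) \<ge> 3" and "linear L" and "inj L"
  shows "m_const TYPE('a) \<ge> 4"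
proof -
  obtain c u v where unit: "norm (L c) = 1" "norm (L u) = 1" "norm (L v) = 1"
    and nonzero: "u \<noteq> 0" "v \<noteq> 0" and orth: "u \<bullet> c = 0" "v \<bullet> c = 0" "u \<bullet> v = 0"
    and exposed: "\<And>p. p \<bullet> c = 0 \<Longrightarrow> p \<noteq> 0 \<Longrightarrow> norm (L (c + p)) > 1"
    using exposed_frame[OF assms] by blast
  have L_lin: "L (x + y) = L x + L y" "L (x - y) = L x - L y" "L (- x) = - L x" for x y
    using assms(2) by (simp_all add: linear_add linear_diff linear_neg)
  have no_cancel: "x + y \<noteq> 0 \<and> x - y \<noteq> 0" if "x \<bullet> y = 0" "x \<noteq> 0" for x y :: 'e
    using orthogonal_add_nonzero[OF that] orthogonal_add_nonzero[of x "- y"] that by simp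
  have L_no_cancel: "L x + L y \<noteq> 0 \<and> L x - L y \<noteq> 0" if "x \<bullet> y = 0" "x \<noteq> 0" for x y
    using no_cancel[OF that] assms(2,3) by (metis L_lin(1,2) injD linear_0)
  have "u + v \<noteq> 0" "v - u \<noteq> 0" "u - v \<noteq> 0" "- (u + v) \<noteq> 0"
    using no_cancel[OF orth(3) nonzero(1)] by (metis minus_diff_eq neg_equal_0_iff_equal)+
  moreover have "(u + v) \<bullet> c = 0" "(v - u) \<bullet> c = 0" "(u - v) \<bullet> c = 0" "(- (u + v)) \<bullet> c = 0"
    using orth by (simp_all add: inner_diff_left inner_add_left)
  ultimately have "norm (L (c + (u + v))) > 1" "norm (L (c + (v - u))) > 1"
    "norm (L (c + (u - v))) > 1" "norm (L (c + - (u + v))) > 1"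
    by (auto intro: exposed)
  moreover have "L u + L v + L c = L (c + (u + v))" "L u - L v - L c = - L (c + (v - u))"
    "L v - L u - L c = - L (c + (u - v))" "L c - L u - L v = L (c + - (u + v))"
    by (simp_all add: L_lin algebra_simps)
  ultimately have "is_M_set {L u + L v + L c, L u - L v - L c, L v - L u - L c, L c - L u - L v}"
    using unit by (intro four_point_M_set) (auto simp only: norm_minus_cancel)
  moreover have "card {L u + L v + L c, L u - L v - L c, L v - L u - L c, L c - L u - L v} = 4"
    using L_no_cancel orth nonzero by (intro four_point_card) (simp_all add: inner_commute)
  ultimately have "enat 4 \<le> m_const TYPE('a)"
    by (metis M_set_card_le_m_const finite.emptyI finite.insertI)
  then show ?thesis
    by (simp add: numeral_eq_enat)
qed

theorem lemma4:
  assumes "\<exists>B :: 'a::real_normed_vector set. finite B \<and> span B = UNIV"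
    and "dim (UNIV :: 'a set) \<ge> 3"
  shows "m_const TYPE('a) \<ge> 4"
proof -
  obtain L :: "real^3 \<Rightarrow> 'a" where "linear L" and "inj L"
    using linear_embedding_of_euclidean[where 'e = "real^3"] assms(2) by auto
  then show ?thesis
    by (intro m_const_ge_4_of_embedding) simp_all
qed

end
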